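(* Consider the remote control problem described in the context. Without any loss of optimality, at each time $t$ the knowledge of the encoder can be summarized by the tuple $\langle s_t,\Delta_t,s_{t-\Delta_t}\rangle$ and the knowledge of the decoder by the tuple $\langle \Delta_t,s_{t-\Delta_t}\rangle$. That is, restricting the encoder's communication policy to be a function of $\langle s_t,\Delta_t,s_{t-\Delta_t}\rangle$ and the decoder's control policy to be a function of $\langle \Delta_t,s_{t-\Delta_t}\rangle$ does not decrease the optimal value of the objective $\mathbb{E}\big[\sum_{t=0}^\infty \gamma^t (r_t-\beta c_t)\big]$ compared with general causal policies.
   Context: Let $\mathcal{S}$ be a finite state set, $\mathcal{A}$ a finite set of control actions, and for each $a\in\mathcal{A}$ let $\mathbf{P}^a$ be an $|\mathcal{S}|\times|\mathcal{S}|$ stochastic matrix ($P^a_{s,s'}$ is the probability of moving from $s$ to $s'$ under action $a$). Let $r:\mathcal{S}\times\mathcal{A}\times\mathcal{S}\to\mathbb{R}$ be a reward function, written $r_{s,s'}(a)$, let $\gamma\in[0,1)$ be a discount factor and $\beta>0$ a communication cost. A Markov process $s_0,s_1,\dots$ evolves with $s_{t+1}\sim P^{a_t}_{s_t,\cdot}$. At each time $t$ an encoder observes $s_t$ and chooses $c_t\in\{0,1\}$; the decoder then observes $o_t=s_t$ if $c_t=1$ and $o_t=\chi$ (a symbol meaning "no transmission") if $c_t=0$, and chooses a control action $a_t\in\mathcal{A}$; the reward is $r_t=r_{s_t,s_{t+1}}(a_t)$. Policies are causal: the encoder's decision at time $t$ may depend on everything it has observed up to time $t$ (states $s_{0:t}$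 and past decoder observations), and the decoder's action may depend on its observations $o_{0:t}$ and its past actions. The objective is to maximize $\mathbb{E}\big[\sum_{t=0}^\infty\gamma^t(r_t-\beta c_t)\big]$. $\Delta_t$ denotes the time elapsed since the last transmission (so $s_{t-\Delta_t}$ is the last state transmitted to the decoder). *)

theory Defs
  imports "HOL-Probability.Probability_Mass_Function"
begin

text \<open>
  Transition law: P :: 'b \<Rightarrow> 'a \<Rightarrow> 'a pmf, i.e. row s of the stochastic matrix P^a.
  Observation of the decoder: Some s (state transmitted) or None (the symbol chi).

  General (deterministic, causal, time-varying) policies:
   encoder  e :: nat \<Rightarrow> 'a list \<Rightarrow> 'a option list \<Rightarrow> bool,
     c_t = e t [s_0,...,s_t] [o_0,...,o_(t-1)]
   decoder  d :: nat \<Rightarrow> 'a option list \<Rightarrow> 'b list \<Rightarrow> 'b,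
     a_t = d t [o_0,...,o_t] [a_0,...,a_(t-1)]
\<close>

primrec obs :: "(nat \<Rightarrow> 'a list \<Rightarrow> 'a option list \<Rightarrow> bool) \<Rightarrow> 'a list \<Rightarrow> nat \<Rightarrow> 'a option list" where
  "obs e h 0 = []"
| "obs e h (Suc k) = obs e h k @
     [if e k (take (Suc k) h) (obs e h k) then Some (h ! k) else None]"

definition comm :: "(nat \<Rightarrow> 'a list \<Rightarrow> 'a option list \<Rightarrow> bool) \<Rightarrow> 'a list \<Rightarrow> nat \<Rightarrow> bool" where
  "comm e h k = e k (take (Suc k) h) (obs e h k)"

primrec acts :: "(nat \<Rightarrow> 'a list \<Rightarrow> 'a option list \<Rightarrow> bool) \<Rightarrow>
     (nat \<Rightarrow> 'a option list \<Rightarrow> 'b list \<Rightarrow> 'b) \<Rightarrow> 'a list \<Rightarrow> nat \<Rightarrow> 'b list" where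
  "acts e d h 0 = []"
| "acts e d h (Suc k) = acts e d h k @ [d k (obs e h (Suc k)) (acts e d h k)]"

definition act :: "(nat \<Rightarrow> 'a list \<Rightarrow> 'a option list \<Rightarrow> bool) \<Rightarrow>
     (nat \<Rightarrow> 'a option list \<Rightarrow> 'b list \<Rightarrow> 'b) \<Rightarrow> 'a list \<Rightarrow> nat \<Rightarrow> 'b" where
  "act e d h k = d k (obs e h (Suc k)) (acts e d h k)"

primrec hist :: "('b \<Rightarrow> 'a \<Rightarrow> 'a pmf) \<Rightarrow> 'a pmf \<Rightarrow>
     (nat \<Rightarrow> 'a list \<Rightarrow> 'a option list \<Rightarrow> bool) \<Rightarrow>
     (nat \<Rightarrow> 'a option list \<Rightarrow> 'b list \<Rightarrow> 'b) \<Rightarrow> nat \<Rightarrow> 'a list pmf" where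
  "hist P mu e d 0 = map_pmf (\<lambda>s. [s]) mu"
| "hist P mu e d (Suc t) = bind_pmf (hist P mu e d t)
     (\<lambda>h. map_pmf (\<lambda>s'. h @ [s']) (P (act e d h t) (h ! t)))"

definition stage :: "('b \<Rightarrow> 'a \<Rightarrow> 'a pmf) \<Rightarrow> 'a pmf \<Rightarrow> ('a \<Rightarrow> 'b \<Rightarrow> 'a \<Rightarrow> real) \<Rightarrow> real \<Rightarrow>
     (nat \<Rightarrow> 'a list \<Rightarrow> 'a option list \<Rightarrow> bool) \<Rightarrow>
     (nat \<Rightarrow> 'a option list \<Rightarrow> 'b list \<Rightarrow> 'b) \<Rightarrow> nat \<Rightarrow> real" where
  "stage P mu r \<beta> e d t = measure_pmf.expectation (hist P mu e d (Suc t))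
     (\<lambda>h. r (h ! t) (act e d h t) (h ! Suc t) - \<beta> * (if comm e h t then 1 else 0))"

text \<open>Objective E[sum_t gamma^t (r_t - beta c_t)] (rewards bounded, so the series converges
  absolutely and expectation and sum commute).\<close>
definition objective :: "('b \<Rightarrow> 'a \<Rightarrow> 'a pmf) \<Rightarrow> 'a pmf \<Rightarrow> ('a \<Rightarrow> 'b \<Rightarrow> 'a \<Rightarrow> real) \<Rightarrow> real \<Rightarrow> real \<Rightarrow>
     (nat \<Rightarrow> 'a list \<Rightarrow> 'a option list \<Rightarrow> bool) \<Rightarrow>
     (nat \<Rightarrow> 'a option list \<Rightarrow> 'b list \<Rightarrow> 'b) \<Rightarrow> real" where
  "objective P mu r \<gamma> \<beta> e d = (\<Sum>t. \<gamma> ^ t * stage P mu r \<beta> e d t)"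

text \<open>Last transmission seen in the observation list os, reported at time t as
  Some (Delta, s_(t-Delta)); None if nothing has been transmitted yet.\<close>
definition last_tx :: "nat \<Rightarrow> 'a option list \<Rightarrow> (nat \<times> 'a) option" where
  "last_tx t os =
     (if \<exists>i<length os. os ! i \<noteq> None
      then let i = Max {i. i < length os \<and> os ! i \<noteq> None} in Some (t - i, the (os ! i))
      else None)"

text \<open>Structured encoder: c_t = f t s_t (Delta_t, s_(t-Delta_t)), where the last transmission
  is taken among times < t (the information before deciding c_t).\<close>
definition struct_enc :: "(nat \<Rightarrow> 'a \<Rightarrow> (nat \<times> 'a) option \<Rightarrow> bool) \<Rightarrow>
     nat \<Rightarrow> 'a list \<Rightarrow> 'a option list \<Rightarrow> bool" where
  "struct_enc f = (\<lambda>t ss os. f t (last ss) (last_tx t os))"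

text \<open>Structured decoder: a_t = g t (Delta_t, s_(t-Delta_t)), last transmission among times \<le> t.\<close>
definition struct_dec :: "(nat \<Rightarrow> (nat \<times> 'a) option \<Rightarrow> 'b) \<Rightarrow>
     nat \<Rightarrow> 'a option list \<Rightarrow> 'b list \<Rightarrow> 'b" where
  "struct_dec g = (\<lambda>t os as. g t (last_tx t os))"

end

theory Submission
  imports Defs
begin

text \<open>
  Fix a horizon \<open>T\<close> and describe what the decoder knows at time \<open>t\<close> by an unnormalised belief
  \<open>b\<close> on \<open>s\<^sub>t\<close>: the mass of the state histories compatible with its observations, sorted by their
  current state. The best payoff of the remaining \<open>k\<close> stages is \<open>belief_value k t b\<close>, a maximum over
  the set \<open>E\<close> of states the encoder transmits and the action \<open>a\<close> the decoder plays when nothing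
  arrives; after receiving \<open>x\<close> the decoder knows the state and plays its best action. This value is
  positively homogeneous and subadditive in \<open>b\<close>, hence convex.

  A general encoder may treat histories with the same current state differently, which splits the
  mass \<open>b x\<close> into a transmitted and a silent part. By convexity, sending all of \<open>b x\<close> to one side is
  never worse, so by induction every causal pair of policies earns at most \<open>belief_value T 0 mu\<close> in
  the first \<open>T\<close> stages. The policy following the maximisers earns exactly that, and its decisions
  depend only on the time, the current state (encoder) and the last transmission
  \<open>(\<Delta>\<^sub>t, s\<^bsub>t-\<Delta>\<^sub>t\<^esub>)\<close>. As payoffs are bounded, truncating the discounted objective at \<open>T\<close>
  costs \<open>O(\<gamma>\<^sup>T)\<close>, and \<open>T \<rightarrow> \<infinity>\<close> gives the equality of the suprema.
\<close>

lemma sum_UNIV_option: "(\<Sum>ob\<in>UNIV. f ob) = f None + (\<Sum>x\<in>UNIV. f (Some (x :: 'a :: finite)))"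
  by (simp add: UNIV_option_conv sum.reindex)

lemma sum_pmf_UNIV [simp]: "(\<Sum>a\<in>UNIV. pmf M (a :: 'x :: finite)) = 1"
  using sum_pmf_eq_1[of UNIV M] by simp

lemma expectation_finite_UNIV: "measure_pmf.expectation M f = (\<Sum>a\<in>UNIV. pmf M a * f (a :: 'x :: finite))"
  by (subst integral_measure_pmf_real[of UNIV]) (auto simp: mult.commute)

lemma expectation_bind_pmf_finite:
  fixes f :: "'x \<Rightarrow> real"
  assumes fin_M: "finite (set_pmf M)" and fin_N: "\<And>x. x \<in> set_pmf M \<Longrightarrow> finite (set_pmf (N x))"
  shows "measure_pmf.expectation (bind_pmf M N) f = measure_pmf.expectation M (\<lambda>x. measure_pmf.expectation (N x) f)"
proof -
  let ?A = "set_pmf (bind_pmf M N)"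
  have fin_A: "finite ?A"
    using fin_M fin_N by simp
  have "measure_pmf.expectation (bind_pmf M N) f = (\<Sum>a\<in>?A. f a * pmf (bind_pmf M N) a)"
    by (rule integral_measure_pmf_real[OF fin_A]) auto
  also have "\<dots> = (\<Sum>a\<in>?A. f a * (\<Sum>x\<in>set_pmf M. pmf (N x) a * pmf M x))"
    by (intro sum.cong refl, subst pmf_bind, subst integral_measure_pmf_real[OF fin_M]) auto
  also have "\<dots> = (\<Sum>x\<in>set_pmf M. (\<Sum>a\<in>?A. f a * pmf (N x) a) * pmf M x)"
    by (simp add: sum_distrib_left sum_distrib_right mult_ac) (rule sum.swap)
  also have "\<dots> = (\<Sum>x\<in>set_pmf M. measure_pmf.expectation (N x) f * pmf M x)"
    by (intro sum.cong refl arg_cong2[where f = "(*)"], rule integral_measure_pmf_real[symmetric, OF fin_A]) auto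
  also have "\<dots> = measure_pmf.expectation M (\<lambda>x. measure_pmf.expectation (N x) f)"
    by (rule integral_measure_pmf_real[symmetric, OF fin_M]) auto
  finally show ?thesis .
qed

lemma Max_range_ge: "f z \<le> Max (range (f :: 'c :: finite \<Rightarrow> 'r :: linorder))"
  by (rule Max_ge) auto

lemma arg_max_eq_Max: "f (ARG_MAX f z. True) = Max (range (f :: 'c :: finite \<Rightarrow> 'r :: linorder))"
proof -
  have "Max (range f) \<in> range f"
    by (rule Max_in) auto
  then obtain z where z: "Max (range f) = f z"
    by blast
  have "f (ARG_MAX f z. True) = f z"
    by (rule arg_max_equality) (simp_all add: z[symmetric] Max_range_ge)
  then show ?thesis
    by (simp add: z)
qed

lemma Max_range_scale:
  fixes f :: "'c :: finite \<Rightarrow> real"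
  assumes "0 \<le> c"
  shows "Max (range (\<lambda>z. c * f z)) = c * Max (range f)"
proof (rule Max_eqI)
  show "y \<le> c * Max (range f)" if "y \<in> range (\<lambda>z. c * f z)" for y
    using that assms Max_range_ge[of f] by (auto intro: mult_left_mono)
  have "Max (range f) \<in> range f"
    by (rule Max_in) auto
  then obtain z where "Max (range f) = f z"
    by blast
  then show "c * Max (range f) \<in> range (\<lambda>z. c * f z)"
    using rangeI[of "\<lambda>z. c * f z" z] by simp
qed simp

lemma Max_range_le_add:
  fixes f g h :: "'c :: finite \<Rightarrow> real"
  assumes "\<And>z. f z \<le> g z + h z"
  shows "Max (range f) \<le> Max (range g) + Max (range h)"
proof (rule Max.boundedI)
  fix y
  assume "y \<in> range f"
  then obtain z where "y = f z"
    by blast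
  then show "y \<le> Max (range g) + Max (range h)"
    using assms[of z] add_mono[OF Max_range_ge[of g z] Max_range_ge[of h z]] by simp
qed auto

lemma convex_split_le_concentrated:
  fixes G :: "('a \<Rightarrow> real) \<Rightarrow> ('a \<Rightarrow> real) \<Rightarrow> real"
  assumes convex: "\<And>l f f' g g'. 0 \<le> l \<Longrightarrow> l \<le> 1 \<Longrightarrow>
      G (\<lambda>x. l * f x + (1 - l) * g x) (\<lambda>x. l * f' x + (1 - l) * g' x) \<le> l * G f f' + (1 - l) * G g g'"
    and nonneg: "0 \<le> u x" "0 \<le> v x"
  shows "G u v \<le> max (G (u(x := 0)) (v(x := u x + v x))) (G (u(x := u x + v x)) (v(x := 0)))"
proof -
  define m where "m = u x + v x"
  define l where "l = v x / m"
  have l: "0 \<le> l" "l \<le> 1"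
    using nonneg by (auto simp: l_def m_def divide_le_eq_1)
  have "v x = l * m \<and> u x = (1 - l) * m"
  proof (cases "m = 0")
    case True
    then show ?thesis
      using nonneg by (simp add: m_def)
  next
    case False
    then show ?thesis
      by (simp add: l_def m_def field_simps)
  qed
  then have "u = (\<lambda>y. l * (u(x := 0)) y + (1 - l) * (u(x := m)) y)"
    and "v = (\<lambda>y. l * (v(x := m)) y + (1 - l) * (v(x := 0)) y)"
    by (auto simp: fun_eq_iff algebra_simps)
  then have "G u v \<le> l * G (u(x := 0)) (v(x := m)) + (1 - l) * G (u(x := m)) (v(x := 0))"
    using convex[OF l, where f = "u(x := 0)" and f' = "v(x := m)" and g = "u(x := m)" and g' = "v(x := 0)"]
    by simp
  also have "\<dots> \<le> max (G (u(x := 0)) (v(x := m))) (G (u(x := m)) (v(x := 0)))"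
    using l by (intro convex_bound_le) auto
  finally show ?thesis
    by (simp add: m_def)
qed

lemma convex_split_le_vertex:
  fixes G :: "('a :: finite \<Rightarrow> real) \<Rightarrow> ('a \<Rightarrow> real) \<Rightarrow> real"
  assumes convex: "\<And>l f f' g g'. 0 \<le> l \<Longrightarrow> l \<le> 1 \<Longrightarrow>
      G (\<lambda>x. l * f x + (1 - l) * g x) (\<lambda>x. l * f' x + (1 - l) * g' x) \<le> l * G f f' + (1 - l) * G g g'"
    and nonneg: "\<And>x. 0 \<le> b0 x" "\<And>x. 0 \<le> b1 x"
  shows "\<exists>E. G b0 b1 \<le> G (\<lambda>x. if E x then 0 else b0 x + b1 x) (\<lambda>x. if E x then b0 x + b1 x else 0)"
proof -
  have vertex: "\<exists>E. G b0 b1 \<le> G (\<lambda>x. if E x then 0 else b0 x + b1 x) (\<lambda>x. if E x then b0 x + b1 x else 0)"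
    if "finite S" "\<forall>x. x \<notin> S \<longrightarrow> b0 x = 0 \<or> b1 x = 0" "\<forall>x. 0 \<le> b0 x \<and> 0 \<le> b1 x" for S b0 b1
    using that
  proof (induction S arbitrary: b0 b1 rule: finite_induct)
    case empty
    then have "b0 x = 0 \<or> b1 x = 0" for x
      by simp
    then have "(\<lambda>x. if b0 x = 0 then 0 else b0 x + b1 x) = b0" "(\<lambda>x. if b0 x = 0 then b0 x + b1 x else 0) = b1"
      by (auto simp: fun_eq_iff)
    then show ?case
      by (intro exI[of _ "\<lambda>x. b0 x = 0"]) simp
  next
    case (insert x S)
    define u0 where "u0 = b0(x := 0)"
    define u1 where "u1 = b1(x := b0 x + b1 x)"
    define v0 where "v0 = b0(x := b0 x + b1 x)"
    define v1 where "v1 = b1(x := 0)"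
    have bx: "0 \<le> b0 x" "0 \<le> b1 x"
      using insert.prems(2) by auto
    have G_le: "G b0 b1 \<le> max (G u0 u1) (G v0 v1)"
      unfolding u0_def u1_def v0_def v1_def by (rule convex_split_le_concentrated[where G = G and u = b0 and v = b1 and x = x, OF convex bx])
    have sums: "u0 y + u1 y = b0 y + b1 y" "v0 y + v1 y = b0 y + b1 y" for y
      by (auto simp: u0_def u1_def v0_def v1_def)
    have "\<exists>E. G u0 u1 \<le> G (\<lambda>y. if E y then 0 else u0 y + u1 y) (\<lambda>y. if E y then u0 y + u1 y else 0)"
      using insert.prems bx by (intro insert.IH) (auto simp: u0_def u1_def)
    then obtain Eu where Eu: "G u0 u1 \<le> G (\<lambda>y. if Eu y then 0 else u0 y + u1 y) (\<lambda>y. if Eu y then u0 y + u1 y else 0)"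
      by blast
    have "\<exists>E. G v0 v1 \<le> G (\<lambda>y. if E y then 0 else v0 y + v1 y) (\<lambda>y. if E y then v0 y + v1 y else 0)"
      using insert.prems bx by (intro insert.IH) (auto simp: v0_def v1_def)
    then obtain Ev where Ev: "G v0 v1 \<le> G (\<lambda>y. if Ev y then 0 else v0 y + v1 y) (\<lambda>y. if Ev y then v0 y + v1 y else 0)"
      by blast
    show ?case
    proof (cases "G v0 v1 \<le> G u0 u1")
      case True
      then show ?thesis
        using G_le Eu unfolding sums by (intro exI[of _ Eu]) simp
    next
      case False
      then show ?thesis
        using G_le Ev unfolding sums by (intro exI[of _ Ev]) simp
    qed
  qed
  show ?thesis
    using nonneg by (intro vertex[of UNIV]) simp_all
qed

lemma abs_discounted_tail_le:
  fixes f :: "nat \<Rightarrow> real"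
  assumes "0 \<le> \<gamma>" and "\<gamma> < 1" and "\<And>n. \<bar>f n\<bar> \<le> B"
  shows "\<bar>(\<Sum>n. \<gamma> ^ n * f n) - (\<Sum>n<T. \<gamma> ^ n * f n)\<bar> \<le> B * \<gamma> ^ T / (1 - \<gamma>)"
proof -
  have geometric: "summable (\<lambda>n. c * \<gamma> ^ n)" for c
    using assms by (intro summable_mult summable_geometric) simp
  have bound: "\<bar>\<gamma> ^ n * f n\<bar> \<le> B * \<gamma> ^ n" for n
    using assms(1) mult_left_mono[OF assms(3)[of n], of "\<gamma> ^ n"] by (simp add: abs_mult mult.commute)
  have "summable (\<lambda>n. \<gamma> ^ n * f n)"
    using bound by (intro summable_comparison_test'[OF geometric[of B], of 0]) simp
  then have "(\<Sum>n. \<gamma> ^ n * f n) - (\<Sum>n<T. \<gamma> ^ n * f n) = (\<Sum>n. \<gamma> ^ (n + T) * f (n + T))"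
    using suminf_split_initial_segment[of "\<lambda>n. \<gamma> ^ n * f n" T] by simp
  also have "\<bar>\<dots>\<bar> \<le> (\<Sum>n. B * \<gamma> ^ T * \<gamma> ^ n)"
  proof -
    have tail_bound: "\<bar>\<gamma> ^ (n + T) * f (n + T)\<bar> \<le> B * \<gamma> ^ T * \<gamma> ^ n" for n
      using bound[of "n + T"] by (simp add: power_add mult_ac)
    then have summable_abs: "summable (\<lambda>n. \<bar>\<gamma> ^ (n + T) * f (n + T)\<bar>)"
      by (intro summable_comparison_test'[OF geometric[of "B * \<gamma> ^ T"], of 0]) simp
    then have "\<bar>\<Sum>n. \<gamma> ^ (n + T) * f (n + T)\<bar> \<le> (\<Sum>n. \<bar>\<gamma> ^ (n + T) * f (n + T)\<bar>)"
      using summable_norm[of "\<lambda>n. \<gamma> ^ (n + T) * f (n + T)"] by simp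
    also have "\<dots> \<le> (\<Sum>n. B * \<gamma> ^ T * \<gamma> ^ n)"
      by (rule suminf_le[OF tail_bound summable_abs geometric])
    finally show ?thesis .
  qed
  also have "\<dots> = B * \<gamma> ^ T / (1 - \<gamma>)"
    using assms by (simp add: suminf_mult suminf_geometric)
  finally show ?thesis .
qed

lemma le_of_le_plus_geometric:
  fixes x y C \<gamma> :: real
  assumes "0 \<le> \<gamma>" and "\<gamma> < 1" and "\<And>T. x \<le> y + C * \<gamma> ^ T"
  shows "x \<le> y"
proof -
  have "(\<lambda>T. y + C * \<gamma> ^ T) \<longlonglongrightarrow> y + C * 0"
    using assms by (intro tendsto_intros LIMSEQ_power_zero) simp
  then show ?thesis
    using assms(3) by (simp add: LIMSEQ_le_const)
qed

lemma length_obs [simp]: "length (obs e h k) = k"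
  by (induction k) auto

lemma obs_append: "k \<le> length h \<Longrightarrow> obs e (h @ z) k = obs e h k"
  by (induction k) (auto simp: nth_append)

lemma comm_append: "t < length h \<Longrightarrow> comm e (h @ z) t = comm e h t"
  unfolding comm_def by (simp add: obs_append)

definition obs_at :: "(nat \<Rightarrow> 'a list \<Rightarrow> 'a option list \<Rightarrow> bool) \<Rightarrow> 'a list \<Rightarrow> nat \<Rightarrow> 'a option" where
  "obs_at e h t = (if comm e h t then Some (h ! t) else None)"

lemma obs_Suc: "obs e h (Suc t) = obs e h t @ [obs_at e h t]"
  by (simp add: obs_at_def comm_def)

primrec dec_actions :: "(nat \<Rightarrow> 'a option list \<Rightarrow> 'b list \<Rightarrow> 'b) \<Rightarrow> 'a option list \<Rightarrow> nat \<Rightarrow> 'b list" where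
  "dec_actions d os 0 = []"
| "dec_actions d os (Suc k) = dec_actions d os k @ [d k (take (Suc k) os) (dec_actions d os k)]"

definition dec_act :: "(nat \<Rightarrow> 'a option list \<Rightarrow> 'b list \<Rightarrow> 'b) \<Rightarrow> 'a option list \<Rightarrow> 'a option \<Rightarrow> nat \<Rightarrow> 'b" where
  "dec_act d os ob t = d t (os @ [ob]) (dec_actions d os t)"

lemma dec_actions_append: "k \<le> length os \<Longrightarrow> dec_actions d (os @ zs) k = dec_actions d os k"
  by (induction k) auto

lemma acts_eq_dec_actions: "acts e d h k = dec_actions d (obs e h k) k"
  by (induction k) (simp_all add: obs_Suc dec_actions_append del: obs.simps)

lemma act_eq_dec_act: "act e d h t = dec_act d (obs e h t) (obs_at e h t) t"
  unfolding act_def dec_act_def acts_eq_dec_actions obs_Suc by (simp del: obs.simps)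

lemma act_append: "t < length h \<Longrightarrow> act e d (h @ z) t = act e d h t"
  by (simp add: act_eq_dec_act obs_at_def comm_append obs_append nth_append)

lemma last_tx_Nil: "last_tx t [] = None"
  by (simp add: last_tx_def)

lemma last_tx_Some: "last_tx t (os @ [Some x]) = Some (t - length os, x)"
proof -
  have "\<exists>i<length (os @ [Some x]). (os @ [Some x]) ! i \<noteq> None"
    by (rule exI[of _ "length os"]) simp
  moreover have "Max {i. i < length (os @ [Some x]) \<and> (os @ [Some x]) ! i \<noteq> None} = length os"
    by (rule Max_eqI) auto
  ultimately show ?thesis
    unfolding last_tx_def by (simp add: Let_def)
qed

lemma last_tx_None: "last_tx t (os @ [None]) = last_tx t os"
proof -
  have S: "{i. i < length (os @ [None]) \<and> (os @ [None]) ! i \<noteq> None} = {i. i < length os \<and> os ! i \<noteq> None}"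
    by (auto simp: nth_append less_Suc_eq)
  then have "(\<exists>i<length (os @ [None]). (os @ [None]) ! i \<noteq> None) = (\<exists>i<length os. os ! i \<noteq> None)"
    by blast
  moreover have "\<And>i. i < length os \<Longrightarrow> (os @ [None]) ! i = os ! i"
    by (simp add: nth_append)
  ultimately show ?thesis
    unfolding last_tx_def S by (auto simp: Let_def)
qed

lemma last_tx_index: "last_tx t os = Some (D, s) \<Longrightarrow> \<exists>i<length os. D = t - i"
proof -
  assume lt: "last_tx t os = Some (D, s)"
  let ?S = "{i. i < length os \<and> os ! i \<noteq> None}"
  have ex: "\<exists>i<length os. os ! i \<noteq> None"
    using lt unfolding last_tx_def by (auto split: if_splits)
  then have "Max ?S \<in> ?S"
    by (intro Max_in) auto
  moreover have "D = t - Max ?S"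
    using lt ex unfolding last_tx_def by (simp add: Let_def)
  ultimately show ?thesis by blast
qed

lemma last_tx_pos: "length os = t \<Longrightarrow> last_tx t os = Some (D, s) \<Longrightarrow> 0 < D"
  by (auto dest: last_tx_index)

lemma last_tx_Suc: "length os \<le> Suc t \<Longrightarrow> last_tx (Suc t) os = map_option (apfst Suc) (last_tx t os)"
proof (cases "\<exists>i<length os. os ! i \<noteq> None")
  case True
  let ?S = "{i. i < length os \<and> os ! i \<noteq> None}"
  assume "length os \<le> Suc t"
  moreover have "Max ?S \<in> ?S"
    using True by (intro Max_in) auto
  ultimately show ?thesis
    using True unfolding last_tx_def by (simp add: Let_def Suc_diff_le)
qed (auto simp: last_tx_def)

definition hists :: "nat \<Rightarrow> 'a list set" where
  "hists t = {h. length h = Suc t}"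

lemma finite_hists [simp]: "finite (hists t :: 'a :: finite list set)"
  using finite_lists_length_eq[of "UNIV :: 'a set" "Suc t"] by (simp add: hists_def)

lemma sum_hists_0: "(\<Sum>h\<in>hists 0. g h) = (\<Sum>s\<in>UNIV. g [s])"
proof -
  have "hists 0 = range (\<lambda>s. [s])"
    by (auto simp: hists_def length_Suc_conv)
  then show ?thesis
    by (subst sum.reindex_cong[where l = "\<lambda>s. [s]" and B = UNIV]) (auto simp: inj_on_def)
qed

lemma sum_hists_Suc: "(\<Sum>h\<in>hists (Suc t). g h) = (\<Sum>h\<in>hists t. \<Sum>s\<in>UNIV. g (h @ [s :: 'a :: finite]))"
proof -
  let ?snoc = "\<lambda>p :: 'a list \<times> 'a. fst p @ [snd p]"
  have "hists (Suc t) = ?snoc ` (hists t \<times> UNIV)"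
  proof (intro equalityI subsetI)
    fix h :: "'a list"
    assume "h \<in> hists (Suc t)"
    then have "h \<noteq> []" and "butlast h \<in> hists t"
      by (auto simp: hists_def)
    then show "h \<in> ?snoc ` (hists t \<times> UNIV)"
      by (intro image_eqI[of _ _ "(butlast h, last h)"]) simp_all
  qed (auto simp: hists_def)
  moreover have "inj_on ?snoc (hists t \<times> UNIV)"
    by (auto simp: inj_on_def)
  ultimately have "(\<Sum>h\<in>hists (Suc t). g h) = (\<Sum>p\<in>hists t \<times> UNIV. g (?snoc p))"
    by (simp add: sum.reindex)
  then show ?thesis
    by (simp add: sum.cartesian_product case_prod_beta)
qed

definition marginal :: "nat \<Rightarrow> ('a list \<Rightarrow> real) \<Rightarrow> 'a \<Rightarrow> real" where
  "marginal t w x = (\<Sum>h\<in>hists t. if h ! t = x then w h else 0)"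

lemma sum_marginal: "(\<Sum>x\<in>UNIV. marginal t w x * f x) = (\<Sum>h\<in>hists t. w h * f (h ! t :: 'a :: finite))"
proof -
  have "(\<Sum>x\<in>UNIV. marginal t w x * f x) = (\<Sum>h\<in>hists t. \<Sum>x\<in>UNIV. (if h ! t = x then w h else 0) * f x)"
    unfolding marginal_def sum_distrib_right by (rule sum.swap)
  also have "\<dots> = (\<Sum>h\<in>hists t. \<Sum>x\<in>UNIV. if h ! t = x then w h * f x else 0)"
    by (intro sum.cong) auto
  finally show ?thesis
    by simp
qed

lemma marginal_nonneg: "\<forall>h. 0 \<le> w h \<Longrightarrow> 0 \<le> marginal t w x"
  unfolding marginal_def by (intro sum_nonneg) auto

definition succ_weight :: "('a list \<Rightarrow> real) \<Rightarrow> ('a list \<Rightarrow> 'a pmf) \<Rightarrow> 'a list \<Rightarrow> real" where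
  "succ_weight w K h = w (butlast h) * pmf (K (butlast h)) (last h)"

lemma succ_weight_snoc [simp]: "succ_weight w K (h @ [s]) = w h * pmf (K h) s"
  by (simp add: succ_weight_def)

lemma marginal_succ_weight:
  fixes w :: "'a :: finite list \<Rightarrow> real"
  assumes "\<And>h. h \<in> hists t \<Longrightarrow> w h \<noteq> 0 \<Longrightarrow> K h = Q (h ! t)"
  shows "marginal (Suc t) (succ_weight w K) y = (\<Sum>x\<in>UNIV. marginal t w x * pmf (Q x) y)"
proof -
  have "marginal (Suc t) (succ_weight w K) y = (\<Sum>h\<in>hists t. w h * pmf (K h) y)"
    unfolding marginal_def sum_hists_Suc
    by (intro sum.cong refl) (simp add: hists_def nth_append)
  also have "\<dots> = (\<Sum>h\<in>hists t. w h * pmf (Q (h ! t)) y)"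
    using assms by (intro sum.cong refl) (metis mult_zero_left)
  finally show ?thesis
    by (simp add: sum_marginal)
qed

definition obs_part :: "(nat \<Rightarrow> 'a list \<Rightarrow> 'a option list \<Rightarrow> bool) \<Rightarrow> nat \<Rightarrow> 'a option \<Rightarrow>
    ('a list \<Rightarrow> real) \<Rightarrow> 'a list \<Rightarrow> real" where
  "obs_part e t ob w h = (if obs_at e h t = ob then w h else 0)"

lemma sum_obs_part: "(\<Sum>ob\<in>UNIV. obs_part e t ob w h) = w (h :: 'a :: finite list)"
  by (simp add: obs_part_def)

lemma obs_part_Some_eq_0: "h ! t \<noteq> x \<Longrightarrow> obs_part e t (Some x) w h = 0"
  by (simp add: obs_part_def obs_at_def)

lemma marginal_obs_part_Some:
  "marginal t (obs_part e t (Some x) w) y = (if y = x then marginal t (obs_part e t (Some x) w) x else 0)"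
  unfolding marginal_def by (auto intro!: sum.neutral simp: obs_part_Some_eq_0)

lemma sum_obs_part_Some: "(\<Sum>h\<in>hists t. obs_part e t (Some x) w h) = marginal t (obs_part e t (Some x) w) x"
  unfolding marginal_def by (intro sum.cong) (auto simp: obs_part_Some_eq_0)

lemma marginal_eq_obs_parts:
  "marginal t w x = marginal t (obs_part e t None w) x + marginal t (obs_part e t (Some x) w) x"
  unfolding marginal_def sum.distrib[symmetric] by (intro sum.cong) (auto simp: obs_part_def obs_at_def)

lemma marginal_obs_part_None_eq:
  assumes "\<forall>h\<in>hists t. w h \<noteq> 0 \<longrightarrow> comm e h t = E (h ! t)"
  shows "marginal t (obs_part e t None w) x = (if E x then 0 else marginal t w x)"
  unfolding marginal_def using assms
  by (auto intro!: sum.cong sum.neutral simp: obs_part_def obs_at_def)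

lemma marginal_obs_part_Some_eq:
  assumes "\<forall>h\<in>hists t. w h \<noteq> 0 \<longrightarrow> comm e h t = E (h ! t)"
  shows "marginal t (obs_part e t (Some x) w) x = (if E x then marginal t w x else 0)"
  unfolding marginal_def using assms
  by (auto intro!: sum.cong sum.neutral simp: obs_part_def obs_at_def)

lemma obs_part_nonneg: "\<forall>h. 0 \<le> w h \<Longrightarrow> \<forall>h. 0 \<le> obs_part e t ob w h"
  by (simp add: obs_part_def)

lemma succ_weight_nonneg: "\<forall>h. 0 \<le> w h \<Longrightarrow> \<forall>h. 0 \<le> succ_weight w K h"
  by (simp add: succ_weight_def)

lemma obs_succ_weight_obs_part:
  assumes "\<forall>h\<in>hists t. w h \<noteq> 0 \<longrightarrow> obs e h t = os"
  shows "\<forall>h\<in>hists (Suc t). succ_weight (obs_part e t ob w) K h \<noteq> 0 \<longrightarrow> obs e h (Suc t) = os @ [ob]"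
proof (intro ballI impI)
  fix h
  assume "h \<in> hists (Suc t)" and "succ_weight (obs_part e t ob w) K h \<noteq> 0"
  then have "h \<noteq> []" and "butlast h \<in> hists t" and "obs_at e (butlast h) t = ob" and "w (butlast h) \<noteq> 0"
    by (auto simp: hists_def succ_weight_def obs_part_def split: if_splits)
  then show "obs e h (Suc t) = os @ [ob]"
    using assms obs_append[of "Suc t" "butlast h" e "[last h]"]
    by (simp add: hists_def obs_Suc del: obs.simps)
qed

lemma marginal_hists_0: "marginal 0 (\<lambda>h. pmf mu (h ! 0)) = pmf (mu :: 'a :: finite pmf)"
  by (simp add: fun_eq_iff marginal_def sum_hists_0)

lemma set_pmf_hist: "set_pmf (hist P mu e d t) \<subseteq> hists t"
  by (induction t) (auto simp: hists_def)

lemma expectation_hist_0: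
  fixes mu :: "'a :: finite pmf"
  shows "measure_pmf.expectation (hist P mu e d 0) f = (\<Sum>h\<in>hists 0. pmf mu (h ! 0) * f h)"
  by (simp add: sum_hists_0 expectation_finite_UNIV)

lemma expectation_hist_Suc:
  fixes P :: "'b \<Rightarrow> 'a :: finite \<Rightarrow> 'a pmf"
  shows "measure_pmf.expectation (hist P mu e d (Suc t)) f =
    measure_pmf.expectation (hist P mu e d t) (\<lambda>h. \<Sum>s\<in>UNIV. pmf (P (act e d h t) (h ! t)) s * f (h @ [s]))"
  unfolding hist.simps
  by (subst expectation_bind_pmf_finite)
    (auto intro: finite_subset[OF set_pmf_hist] simp: expectation_finite_UNIV)

locale remote_control =
  fixes P :: "'b :: finite \<Rightarrow> 'a :: finite \<Rightarrow> 'a pmf"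
    and r :: "'a \<Rightarrow> 'b \<Rightarrow> 'a \<Rightarrow> real"
    and \<gamma> \<beta> :: real
begin

definition exp_reward :: "'a \<Rightarrow> 'b \<Rightarrow> real" where
  "exp_reward x a = (\<Sum>y\<in>UNIV. pmf (P a x) y * r x a y)"

definition trans_kernel :: "(nat \<Rightarrow> 'a list \<Rightarrow> 'a option list \<Rightarrow> bool) \<Rightarrow>
    (nat \<Rightarrow> 'a option list \<Rightarrow> 'b list \<Rightarrow> 'b) \<Rightarrow> nat \<Rightarrow> 'a list \<Rightarrow> 'a pmf" where
  "trans_kernel e d t h = P (act e d h t) (h ! t)"

definition stage_payoff :: "(nat \<Rightarrow> 'a list \<Rightarrow> 'a option list \<Rightarrow> bool) \<Rightarrow>
    (nat \<Rightarrow> 'a option list \<Rightarrow> 'b list \<Rightarrow> 'b) \<Rightarrow> nat \<Rightarrow> 'a list \<Rightarrow> real" where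
  "stage_payoff e d t h = exp_reward (h ! t) (act e d h t) - \<beta> * (if comm e h t then 1 else 0)"

fun reward_to_go :: "(nat \<Rightarrow> 'a list \<Rightarrow> 'a option list \<Rightarrow> bool) \<Rightarrow>
    (nat \<Rightarrow> 'a option list \<Rightarrow> 'b list \<Rightarrow> 'b) \<Rightarrow> nat \<Rightarrow> nat \<Rightarrow> 'a list \<Rightarrow> real" where
  "reward_to_go e d 0 t h = 0"
| "reward_to_go e d (Suc k) t h = \<gamma> ^ t * stage_payoff e d t h
     + (\<Sum>s\<in>UNIV. pmf (trans_kernel e d t h) s * reward_to_go e d k (Suc t) (h @ [s]))"

lemma stage_eq_expectation:
  "stage P mu r \<beta> e d t = measure_pmf.expectation (hist P mu e d t) (stage_payoff e d t)"
  unfolding stage_def expectation_hist_Suc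
proof (intro integral_cong_AE AE_pmfI)
  fix h
  assume "h \<in> set_pmf (hist P mu e d t)"
  then have "length h = Suc t"
    using set_pmf_hist by (fastforce simp: hists_def)
  then show "(\<Sum>s\<in>UNIV. pmf (P (act e d h t) (h ! t)) s * (r ((h @ [s]) ! t) (act e d (h @ [s]) t) ((h @ [s]) ! Suc t)
      - \<beta> * (if comm e (h @ [s]) t then 1 else 0))) = stage_payoff e d t h"
    by (simp add: act_append comm_append nth_append stage_payoff_def exp_reward_def
        right_diff_distrib sum_subtractf sum_distrib_right[symmetric])
qed auto

lemma expectation_reward_to_go:
  "measure_pmf.expectation (hist P mu e d n) (reward_to_go e d k n) = (\<Sum>t\<in>{n..<n + k}. \<gamma> ^ t * stage P mu r \<beta> e d t)"
proof (induction k arbitrary: n)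
  case (Suc k)
  let ?M = "measure_pmf (hist P mu e d n)"
  have int: "integrable ?M f" for f :: "'a list \<Rightarrow> real"
    by (rule integrable_measure_pmf_finite) (meson finite_hists finite_subset set_pmf_hist)
  have "measure_pmf.expectation (hist P mu e d n) (reward_to_go e d (Suc k) n)
      = \<gamma> ^ n * stage P mu r \<beta> e d n + measure_pmf.expectation (hist P mu e d (Suc n)) (reward_to_go e d k (Suc n))"
    unfolding reward_to_go.simps stage_eq_expectation expectation_hist_Suc by (simp add: int trans_kernel_def)
  also have "\<dots> = (\<Sum>t\<in>{n..<n + Suc k}. \<gamma> ^ t * stage P mu r \<beta> e d t)"
    by (simp add: Suc.IH sum.atLeast_Suc_lessThan del: hist.simps)
  finally show ?case .
qed (simp add: reward_to_go.simps(1)[abs_def])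

lemma discounted_stages_eq_reward_to_go:
  "(\<Sum>t<T. \<gamma> ^ t * stage P mu r \<beta> e d t) = (\<Sum>h\<in>hists 0. pmf mu (h ! 0) * reward_to_go e d T 0 h)"
  using expectation_reward_to_go[of mu e d 0 T] unfolding expectation_hist_0 by (simp add: atLeast0LessThan)

section \<open>The value of a belief\<close>

definition predict :: "('a \<Rightarrow> real) \<Rightarrow> 'b \<Rightarrow> 'a \<Rightarrow> real" where
  "predict b a y = (\<Sum>x\<in>UNIV. b x * pmf (P a x) y)"

lemma predict_scale: "predict (\<lambda>x. c * b x) a = (\<lambda>y. c * predict b a y)"
  by (simp add: fun_eq_iff predict_def sum_distrib_left mult.assoc)

lemma predict_add: "predict (\<lambda>x. b x + b' x) a = (\<lambda>y. predict b a y + predict b' a y)"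
  by (simp add: fun_eq_iff predict_def sum.distrib distrib_right)

fun belief_value :: "nat \<Rightarrow> nat \<Rightarrow> ('a \<Rightarrow> real) \<Rightarrow> real" where
  "belief_value 0 t b = 0"
| "belief_value (Suc k) t b = Max (range (\<lambda>(E, a).
      (\<Sum>x\<in>UNIV. (if E x then 0 else b x) * (\<gamma> ^ t * exp_reward x a))
      + belief_value k (Suc t) (predict (\<lambda>x. if E x then 0 else b x) a)
      + (\<Sum>x\<in>UNIV. (if E x then b x else 0) *
           (Max (range (\<lambda>a'. \<gamma> ^ t * exp_reward x a' + belief_value k (Suc t) (pmf (P a' x)))) - \<gamma> ^ t * \<beta>))))"

definition tx_gain :: "nat \<Rightarrow> nat \<Rightarrow> 'a \<Rightarrow> 'b \<Rightarrow> real" where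
  "tx_gain k t x a = \<gamma> ^ t * exp_reward x a + belief_value k (Suc t) (pmf (P a x))"

definition tx_value :: "nat \<Rightarrow> nat \<Rightarrow> 'a \<Rightarrow> real" where
  "tx_value k t x = Max (range (tx_gain k t x))"

definition split_value :: "nat \<Rightarrow> nat \<Rightarrow> 'b \<Rightarrow> ('a \<Rightarrow> real) \<Rightarrow> ('a \<Rightarrow> real) \<Rightarrow> real" where
  "split_value k t a b0 b1 = (\<Sum>x\<in>UNIV. b0 x * (\<gamma> ^ t * exp_reward x a)) + belief_value k (Suc t) (predict b0 a)
     + (\<Sum>x\<in>UNIV. b1 x * (tx_value k t x - \<gamma> ^ t * \<beta>))"

lemma belief_value_Suc: "belief_value (Suc k) t b =
    Max (range (\<lambda>(E, a). split_value k t a (\<lambda>x. if E x then 0 else b x) (\<lambda>x. if E x then b x else 0)))"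
  unfolding split_value_def tx_value_def tx_gain_def by simp

declare belief_value.simps(2) [simp del]

lemma belief_value_scale: "0 \<le> c \<Longrightarrow> belief_value k t (\<lambda>x. c * b x) = c * belief_value k t b"
proof (induction k arbitrary: t b)
  case (Suc k)
  have "split_value k t a (\<lambda>x. c * b0 x) (\<lambda>x. c * b1 x) = c * split_value k t a b0 b1" for a b0 b1
    unfolding split_value_def predict_scale Suc.IH[OF Suc.prems]
    by (simp add: sum_distrib_left mult.assoc distrib_left)
  moreover have "(if E x then 0 else c * b x) = c * (if E x then 0 else b x)"
    "(if E x then c * b x else 0) = c * (if E x then b x else 0)" for E x
    by simp_all
  ultimately show ?case
    unfolding belief_value_Suc by (simp add: case_prod_beta Max_range_scale[OF Suc.prems])
qed simp

lemma split_value_scale: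
  "0 \<le> c \<Longrightarrow> split_value k t a (\<lambda>x. c * b0 x) (\<lambda>x. c * b1 x) = c * split_value k t a b0 b1"
  unfolding split_value_def predict_scale
  by (simp add: belief_value_scale sum_distrib_left mult.assoc distrib_left)

lemma belief_value_add_le: "belief_value k t (\<lambda>x. b x + b' x) \<le> belief_value k t b + belief_value k t b'"
proof (induction k arbitrary: t b b')
  case (Suc k)
  have "split_value k t a (\<lambda>x. u0 x + v0 x) (\<lambda>x. u1 x + v1 x) \<le> split_value k t a u0 u1 + split_value k t a v0 v1"
    for a u0 u1 v0 v1
    unfolding split_value_def predict_add using Suc.IH[of "Suc t" "predict u0 a" "predict v0 a"]
    by (simp add: distrib_right sum.distrib)
  moreover have "(if E x then 0 else b x + b' x) = (if E x then 0 else b x) + (if E x then 0 else b' x)"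
    "(if E x then b x + b' x else 0) = (if E x then b x else 0) + (if E x then b' x else 0)" for E x
    by simp_all
  ultimately show ?case
    unfolding belief_value_Suc by (intro Max_range_le_add) (simp add: case_prod_beta)
qed simp

lemma split_value_add_le:
  "split_value k t a (\<lambda>x. u0 x + v0 x) (\<lambda>x. u1 x + v1 x) \<le> split_value k t a u0 u1 + split_value k t a v0 v1"
  unfolding split_value_def predict_add using belief_value_add_le[of k "Suc t" "predict u0 a" "predict v0 a"]
  by (simp add: distrib_right sum.distrib)

lemma split_value_le_belief_value:
  assumes "\<And>x. 0 \<le> b0 x" "\<And>x. 0 \<le> b1 x"
  shows "split_value k t a b0 b1 \<le> belief_value (Suc k) t (\<lambda>x. b0 x + b1 x)"
proof -
  have "\<exists>E. split_value k t a b0 b1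
      \<le> split_value k t a (\<lambda>x. if E x then 0 else b0 x + b1 x) (\<lambda>x. if E x then b0 x + b1 x else 0)"
  proof (rule convex_split_le_vertex[OF _ assms])
    fix l :: real and u0 u1 v0 v1 :: "'a \<Rightarrow> real"
    assume "0 \<le> l" "l \<le> 1"
    then show "split_value k t a (\<lambda>x. l * u0 x + (1 - l) * v0 x) (\<lambda>x. l * u1 x + (1 - l) * v1 x)
        \<le> l * split_value k t a u0 u1 + (1 - l) * split_value k t a v0 v1"
      using split_value_add_le[of k t a "\<lambda>x. l * u0 x" "\<lambda>x. (1 - l) * v0 x" "\<lambda>x. l * u1 x" "\<lambda>x. (1 - l) * v1 x"]
      by (simp add: split_value_scale)
  qed
  then obtain E where "split_value k t a b0 b1
      \<le> split_value k t a (\<lambda>x. if E x then 0 else b0 x + b1 x) (\<lambda>x. if E x then b0 x + b1 x else 0)"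
    by blast
  also have "\<dots> \<le> belief_value (Suc k) t (\<lambda>x. b0 x + b1 x)"
    unfolding belief_value_Suc
    using Max_range_ge[of "\<lambda>(E, a). split_value k t a (\<lambda>x. if E x then 0 else b0 x + b1 x)
      (\<lambda>x. if E x then b0 x + b1 x else 0)" "(E, a)"] by simp
  finally show ?thesis .
qed

section \<open>General policies earn at most the value\<close>

lemma act_obs_part:
  assumes "\<forall>h\<in>hists t. w h \<noteq> 0 \<longrightarrow> obs e h t = os" and "h \<in> hists t" and "obs_part e t ob w h \<noteq> 0"
  shows "act e d h t = dec_act d os ob t" and "comm e h t \<longleftrightarrow> ob \<noteq> None"
  using assms by (auto simp: act_eq_dec_act obs_part_def obs_at_def split: if_splits)

lemma marginal_succ_None:
  assumes "\<forall>h\<in>hists t. w h \<noteq> 0 \<longrightarrow> obs e h t = os"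
  shows "marginal (Suc t) (succ_weight (obs_part e t None w) (trans_kernel e d t))
    = predict (marginal t (obs_part e t None w)) (dec_act d os None t)"
  unfolding fun_eq_iff predict_def
  using assms by (intro allI marginal_succ_weight) (simp add: trans_kernel_def act_obs_part)

lemma marginal_succ_Some:
  assumes "\<forall>h\<in>hists t. w h \<noteq> 0 \<longrightarrow> obs e h t = os"
  shows "marginal (Suc t) (succ_weight (obs_part e t (Some x) w) (trans_kernel e d t))
    = (\<lambda>y. marginal t (obs_part e t (Some x) w) x * pmf (P (dec_act d os (Some x) t) x) y)"
proof
  fix y
  have "marginal (Suc t) (succ_weight (obs_part e t (Some x) w) (trans_kernel e d t)) y
      = (\<Sum>x'\<in>UNIV. marginal t (obs_part e t (Some x) w) x' * pmf (P (dec_act d os (Some x) t) x) y)"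
    using assms by (intro marginal_succ_weight) (metis trans_kernel_def act_obs_part(1) obs_part_Some_eq_0)
  also have "\<dots> = (\<Sum>x'\<in>UNIV. if x' = x then marginal t (obs_part e t (Some x) w) x * pmf (P (dec_act d os (Some x) t) x) y else 0)"
    by (rule sum.cong[OF refl]) (subst marginal_obs_part_Some, simp)
  finally show "marginal (Suc t) (succ_weight (obs_part e t (Some x) w) (trans_kernel e d t)) y
      = marginal t (obs_part e t (Some x) w) x * pmf (P (dec_act d os (Some x) t) x) y"
    by simp
qed

lemma sum_stage_payoff:
  assumes "\<forall>h\<in>hists t. w h \<noteq> 0 \<longrightarrow> obs e h t = os"
  shows "(\<Sum>h\<in>hists t. w h * stage_payoff e d t h)
    = (\<Sum>x\<in>UNIV. marginal t (obs_part e t None w) x * exp_reward x (dec_act d os None t))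
      + (\<Sum>x\<in>UNIV. marginal t (obs_part e t (Some x) w) x * (exp_reward x (dec_act d os (Some x) t) - \<beta>))"
proof -
  have None: "obs_part e t None w h * stage_payoff e d t h = obs_part e t None w h * exp_reward (h ! t) (dec_act d os None t)"
    if "h \<in> hists t" for h
  proof (cases "obs_part e t None w h = 0")
    case False
    then show ?thesis
      using act_obs_part(1)[OF assms that False, of d] act_obs_part(2)[OF assms that False] by (simp add: stage_payoff_def)
  qed simp
  have Some: "obs_part e t (Some x) w h * stage_payoff e d t h = obs_part e t (Some x) w h * (exp_reward x (dec_act d os (Some x) t) - \<beta>)"
    if "h \<in> hists t" for h x
  proof (cases "obs_part e t (Some x) w h = 0")
    case False
    then show ?thesis
      using act_obs_part(1)[OF assms that False, of d] act_obs_part(2)[OF assms that False]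
        obs_part_Some_eq_0[of h t x e w] by (auto simp: stage_payoff_def)
  qed simp
  have "(\<Sum>h\<in>hists t. w h * stage_payoff e d t h) = (\<Sum>h\<in>hists t. \<Sum>ob\<in>UNIV. obs_part e t ob w h * stage_payoff e d t h)"
    by (simp add: sum_distrib_right[symmetric] sum_obs_part)
  also have "\<dots> = (\<Sum>ob\<in>UNIV. \<Sum>h\<in>hists t. obs_part e t ob w h * stage_payoff e d t h)"
    by (rule sum.swap)
  also have "\<dots> = (\<Sum>h\<in>hists t. obs_part e t None w h * exp_reward (h ! t) (dec_act d os None t))
      + (\<Sum>x\<in>UNIV. \<Sum>h\<in>hists t. obs_part e t (Some x) w h * (exp_reward x (dec_act d os (Some x) t) - \<beta>))"
    unfolding sum_UNIV_option by (intro arg_cong2[where f = "(+)"] sum.cong refl None Some)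
  finally show ?thesis
    by (simp add: sum_marginal sum_distrib_right[symmetric] sum_obs_part_Some)
qed

definition continuation :: "(nat \<Rightarrow> 'a list \<Rightarrow> 'a option list \<Rightarrow> bool) \<Rightarrow>
    (nat \<Rightarrow> 'a option list \<Rightarrow> 'b list \<Rightarrow> 'b) \<Rightarrow> nat \<Rightarrow> nat \<Rightarrow> ('a list \<Rightarrow> real) \<Rightarrow> real" where
  "continuation e d k t v =
     (\<Sum>h\<in>hists (Suc t). succ_weight v (trans_kernel e d t) h * reward_to_go e d k (Suc t) h)"

lemma sum_reward_to_go_Suc:
  "(\<Sum>h\<in>hists t. w h * reward_to_go e d (Suc k) t h)
    = \<gamma> ^ t * (\<Sum>h\<in>hists t. w h * stage_payoff e d t h) + (\<Sum>ob\<in>UNIV. continuation e d k t (obs_part e t ob w))"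
proof -
  let ?S = "\<lambda>h. \<Sum>s\<in>UNIV. pmf (trans_kernel e d t h) s * reward_to_go e d k (Suc t) (h @ [s])"
  have "(\<Sum>ob\<in>UNIV. continuation e d k t (obs_part e t ob w))
      = (\<Sum>ob\<in>UNIV. \<Sum>h\<in>hists t. obs_part e t ob w h * ?S h)"
    by (simp add: continuation_def sum_hists_Suc sum_distrib_left mult.assoc)
  also have "\<dots> = (\<Sum>h\<in>hists t. w h * ?S h)"
    by (subst sum.swap) (simp add: sum_distrib_right[symmetric] sum_obs_part)
  finally show ?thesis
    by (simp add: trans_kernel_def distrib_left sum.distrib sum_distrib_left mult.left_commute)
qed

lemma sum_reward_to_go_Suc_split:
  assumes "\<forall>h\<in>hists t. w h \<noteq> 0 \<longrightarrow> obs e h t = os"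
  shows "(\<Sum>h\<in>hists t. w h * reward_to_go e d (Suc k) t h)
    = (\<Sum>x\<in>UNIV. marginal t (obs_part e t None w) x * (\<gamma> ^ t * exp_reward x (dec_act d os None t)))
      + continuation e d k t (obs_part e t None w)
      + (\<Sum>x\<in>UNIV. marginal t (obs_part e t (Some x) w) x * (\<gamma> ^ t * exp_reward x (dec_act d os (Some x) t) - \<gamma> ^ t * \<beta>)
          + continuation e d k t (obs_part e t (Some x) w))"
  unfolding sum_reward_to_go_Suc sum_stage_payoff[OF assms] sum_UNIV_option
  by (simp add: distrib_left sum_distrib_left sum.distrib sum_subtractf algebra_simps)

lemma sum_reward_to_go_le_belief_value:
  assumes "\<forall>h\<in>hists t. w h \<noteq> 0 \<longrightarrow> obs e h t = os" and "\<forall>h. 0 \<le> w h"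
  shows "(\<Sum>h\<in>hists t. w h * reward_to_go e d k t h) \<le> belief_value k t (marginal t w)"
  using assms
proof (induction k arbitrary: t os w)
  case (Suc k)
  define b0 where "b0 = marginal t (obs_part e t None w)"
  define b1 where "b1 x = marginal t (obs_part e t (Some x) w) x" for x
  define a0 where "a0 = dec_act d os None t"
  define a1 where "a1 x = dec_act d os (Some x) t" for x
  have b1_nonneg: "0 \<le> b1 x" for x
    unfolding b1_def by (intro marginal_nonneg obs_part_nonneg Suc.prems(2))
  have IH: "continuation e d k t (obs_part e t ob w)
      \<le> belief_value k (Suc t) (marginal (Suc t) (succ_weight (obs_part e t ob w) (trans_kernel e d t)))" for ob
    unfolding continuation_def using Suc.prems(2)
    by (intro Suc.IH[OF obs_succ_weight_obs_part[OF Suc.prems(1)]] succ_weight_nonneg obs_part_nonneg)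
  have "continuation e d k t (obs_part e t None w) \<le> belief_value k (Suc t) (predict b0 a0)"
    using IH[of None] by (simp add: marginal_succ_None[OF Suc.prems(1)] b0_def a0_def)
  moreover have "b1 x * (\<gamma> ^ t * exp_reward x (a1 x) - \<gamma> ^ t * \<beta>) + continuation e d k t (obs_part e t (Some x) w)
      \<le> b1 x * (tx_gain k t x (a1 x) - \<gamma> ^ t * \<beta>)" for x
    using IH[of "Some x"]
    by (simp add: marginal_succ_Some[OF Suc.prems(1)] belief_value_scale b1_nonneg[unfolded b1_def]
        b1_def a1_def tx_gain_def algebra_simps)
  ultimately have "(\<Sum>h\<in>hists t. w h * reward_to_go e d (Suc k) t h)
      \<le> (\<Sum>x\<in>UNIV. b0 x * (\<gamma> ^ t * exp_reward x a0)) + belief_value k (Suc t) (predict b0 a0)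
        + (\<Sum>x\<in>UNIV. b1 x * (tx_gain k t x (a1 x) - \<gamma> ^ t * \<beta>))"
    unfolding sum_reward_to_go_Suc_split[OF Suc.prems(1)] b0_def[symmetric] a0_def[symmetric]
      b1_def[symmetric] a1_def[symmetric]
    by (intro add_mono order_refl sum_mono)
  also have "\<dots> \<le> split_value k t a0 b0 b1"
    unfolding split_value_def tx_value_def
    using b1_nonneg by (intro add_left_mono sum_mono mult_left_mono diff_right_mono Max_range_ge) auto
  also have "\<dots> \<le> belief_value (Suc k) t (\<lambda>x. b0 x + b1 x)"
    using Suc.prems(2) b1_nonneg
    unfolding b0_def by (intro split_value_le_belief_value marginal_nonneg obs_part_nonneg)
  also have "(\<lambda>x. b0 x + b1 x) = marginal t w"
    by (rule ext) (simp only: b0_def b1_def marginal_eq_obs_parts[symmetric])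
  finally show ?case .
qed simp

section \<open>The structured policy attains the value\<close>

definition opt_choice :: "nat \<Rightarrow> nat \<Rightarrow> ('a \<Rightarrow> real) \<Rightarrow> ('a \<Rightarrow> bool) \<times> 'b" where
  "opt_choice k t b =
     (ARG_MAX (\<lambda>(E, a). split_value k t a (\<lambda>x. if E x then 0 else b x) (\<lambda>x. if E x then b x else 0)) z. True)"

lemma split_value_opt_choice:
  "split_value k t (snd (opt_choice k t b)) (\<lambda>x. if fst (opt_choice k t b) x then 0 else b x)
     (\<lambda>x. if fst (opt_choice k t b) x then b x else 0) = belief_value (Suc k) t b"
  using arg_max_eq_Max[of "\<lambda>(E, a). split_value k t a (\<lambda>x. if E x then 0 else b x) (\<lambda>x. if E x then b x else 0)"]
  unfolding opt_choice_def belief_value_Suc by (simp add: case_prod_beta)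

definition opt_action :: "nat \<Rightarrow> nat \<Rightarrow> 'a \<Rightarrow> 'b" where
  "opt_action k t x = (ARG_MAX (tx_gain k t x) a. True)"

lemma tx_gain_opt_action: "tx_gain k t x (opt_action k t x) = tx_value k t x"
  by (simp add: opt_action_def tx_value_def arg_max_eq_Max)

text \<open>The argument \<open>lt\<close> of \<open>opt_belief T mu t\<close> is the last transmission as reported at time \<open>t\<close>,
  so \<open>Some (1, s)\<close> means that \<open>s\<close> was sent at time \<open>t - 1\<close>.\<close>

fun opt_belief :: "nat \<Rightarrow> 'a pmf \<Rightarrow> nat \<Rightarrow> (nat \<times> 'a) option \<Rightarrow> 'a \<Rightarrow> real" where
  "opt_belief T mu 0 lt = pmf mu"
| "opt_belief T mu (Suc t) lt = (case lt of
      Some (Suc 0, s) \<Rightarrow> pmf (P (opt_action (T - Suc t) t s) s)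
    | _ \<Rightarrow> (let b = opt_belief T mu t (map_option (apfst (\<lambda>D. D - 1)) lt);
               z = opt_choice (T - Suc t) t b
           in predict (\<lambda>x. if fst z x then 0 else b x) (snd z)))"

declare opt_belief.simps(2) [simp del]

definition opt_enc :: "nat \<Rightarrow> 'a pmf \<Rightarrow> nat \<Rightarrow> 'a \<Rightarrow> (nat \<times> 'a) option \<Rightarrow> bool" where
  "opt_enc T mu t s lt = fst (opt_choice (T - Suc t) t (opt_belief T mu t lt)) s"

definition opt_dec :: "nat \<Rightarrow> 'a pmf \<Rightarrow> nat \<Rightarrow> (nat \<times> 'a) option \<Rightarrow> 'b" where
  "opt_dec T mu t lt = (case lt of
      Some (0, s) \<Rightarrow> opt_action (T - Suc t) t s
    | _ \<Rightarrow> snd (opt_choice (T - Suc t) t (opt_belief T mu t lt)))"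

context
  fixes T :: nat and mu :: "'a pmf" and t k :: nat and os :: "'a option list"
  assumes length_os: "length os = t" and horizon: "T = Suc (t + k)"
begin

lemma comm_opt_enc:
  assumes "h \<in> hists t" and "obs (struct_enc (opt_enc T mu)) h t = os"
  shows "comm (struct_enc (opt_enc T mu)) h t = fst (opt_choice k t (opt_belief T mu t (last_tx t os))) (h ! t)"
proof -
  have "h \<noteq> []" and "length h = Suc t"
    using assms(1) by (auto simp: hists_def)
  then show ?thesis
    using assms(2) horizon by (simp add: comm_def struct_enc_def opt_enc_def last_conv_nth)
qed

lemma dec_act_opt_dec_None:
  "dec_act (struct_dec (opt_dec T mu)) os None t = snd (opt_choice k t (opt_belief T mu t (last_tx t os)))"
proof (cases "last_tx t os")
  case (Some p)
  then show ?thesis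
    using last_tx_pos[OF length_os, of "fst p" "snd p"] horizon
    by (cases p) (simp add: dec_act_def struct_dec_def opt_dec_def last_tx_None split: nat.split)
qed (simp add: dec_act_def struct_dec_def opt_dec_def last_tx_None horizon)

lemma dec_act_opt_dec_Some: "dec_act (struct_dec (opt_dec T mu)) os (Some x) t = opt_action k t x"
  using length_os horizon by (simp add: dec_act_def struct_dec_def opt_dec_def last_tx_Some)

lemma opt_belief_None:
  "opt_belief T mu (Suc t) (last_tx (Suc t) (os @ [None]))
     = (let b = opt_belief T mu t (last_tx t os); z = opt_choice k t b in predict (\<lambda>x. if fst z x then 0 else b x) (snd z))"
proof -
  have lt: "last_tx (Suc t) (os @ [None]) = map_option (apfst Suc) (last_tx t os)"
    using length_os by (simp add: last_tx_Suc last_tx_None)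
  show ?thesis
  proof (cases "last_tx t os")
    case (Some p)
    then obtain D where "0 < D" "last_tx t os = Some (D, snd p)"
      using last_tx_pos[OF length_os, of "fst p" "snd p"] by (cases p) auto
    then show ?thesis
      unfolding lt using horizon by (cases D) (simp_all add: opt_belief.simps(2))
  qed (simp add: lt horizon opt_belief.simps(2))
qed

lemma opt_belief_Some: "opt_belief T mu (Suc t) (last_tx (Suc t) (os @ [Some x])) = pmf (P (opt_action k t x) x)"
  using length_os horizon by (simp add: last_tx_Some opt_belief.simps(2))

context
  fixes w :: "'a list \<Rightarrow> real" and c :: real
  assumes support: "\<forall>h\<in>hists t. w h \<noteq> 0 \<longrightarrow> obs (struct_enc (opt_enc T mu)) h t = os"
    and marginal_w: "marginal t w = (\<lambda>x. c * opt_belief T mu t (last_tx t os) x)"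
begin

lemma marginal_obs_parts_opt_enc:
  defines "z \<equiv> opt_choice k t (opt_belief T mu t (last_tx t os))"
  shows "marginal t (obs_part (struct_enc (opt_enc T mu)) t None w)
      = (\<lambda>x. c * (if fst z x then 0 else opt_belief T mu t (last_tx t os) x))"
    and "marginal t (obs_part (struct_enc (opt_enc T mu)) t (Some x) w) x
      = c * (if fst z x then opt_belief T mu t (last_tx t os) x else 0)"
proof -
  have comm: "\<forall>h\<in>hists t. w h \<noteq> 0 \<longrightarrow> comm (struct_enc (opt_enc T mu)) h t = fst z (h ! t)"
    using comm_opt_enc support by (simp add: z_def)
  show "marginal t (obs_part (struct_enc (opt_enc T mu)) t None w)
      = (\<lambda>x. c * (if fst z x then 0 else opt_belief T mu t (last_tx t os) x))"
    and "marginal t (obs_part (struct_enc (opt_enc T mu)) t (Some x) w) x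
      = c * (if fst z x then opt_belief T mu t (last_tx t os) x else 0)"
    by (simp_all add: marginal_obs_part_None_eq[OF comm] marginal_obs_part_Some_eq[OF comm] marginal_w fun_eq_iff)
qed

lemma marginal_succ_None_opt_policy:
  "marginal (Suc t) (succ_weight (obs_part (struct_enc (opt_enc T mu)) t None w)
      (trans_kernel (struct_enc (opt_enc T mu)) (struct_dec (opt_dec T mu)) t))
    = (\<lambda>y. c * opt_belief T mu (Suc t) (last_tx (Suc t) (os @ [None])) y)"
  unfolding marginal_succ_None[OF support] dec_act_opt_dec_None marginal_obs_parts_opt_enc(1)
    predict_scale opt_belief_None Let_def ..

lemma marginal_succ_Some_opt_policy:
  "marginal (Suc t) (succ_weight (obs_part (struct_enc (opt_enc T mu)) t (Some x) w)
      (trans_kernel (struct_enc (opt_enc T mu)) (struct_dec (opt_dec T mu)) t))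
    = (\<lambda>y. marginal t (obs_part (struct_enc (opt_enc T mu)) t (Some x) w) x
        * opt_belief T mu (Suc t) (last_tx (Suc t) (os @ [Some x])) y)"
  unfolding marginal_succ_Some[OF support] dec_act_opt_dec_Some opt_belief_Some ..

lemma split_value_opt_policy:
  assumes "0 \<le> c"
  shows "split_value k t (dec_act (struct_dec (opt_dec T mu)) os None t)
      (marginal t (obs_part (struct_enc (opt_enc T mu)) t None w))
      (\<lambda>x. marginal t (obs_part (struct_enc (opt_enc T mu)) t (Some x) w) x)
    = belief_value (Suc k) t (marginal t w)"
  unfolding dec_act_opt_dec_None marginal_obs_parts_opt_enc split_value_scale[OF assms]
    split_value_opt_choice marginal_w belief_value_scale[OF assms] ..

end

end

lemma sum_reward_to_go_opt_policy:
  assumes "\<forall>h\<in>hists t. w h \<noteq> 0 \<longrightarrow> obs (struct_enc (opt_enc T mu)) h t = os" and "\<forall>h. 0 \<le> w h"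
    and "length os = t" and "T = t + k" and "0 \<le> c"
    and "marginal t w = (\<lambda>x. c * opt_belief T mu t (last_tx t os) x)"
  shows "(\<Sum>h\<in>hists t. w h * reward_to_go (struct_enc (opt_enc T mu)) (struct_dec (opt_dec T mu)) k t h)
    = belief_value k t (marginal t w)"
  using assms
proof (induction k arbitrary: t os w c)
  case (Suc k)
  let ?e = "struct_enc (opt_enc T mu)" and ?d = "struct_dec (opt_dec T mu)"
  note support = Suc.prems(1) and length_os = Suc.prems(3)
  have T: "T = Suc (t + k)"
    using Suc.prems(4) by simp
  define b0 where "b0 = marginal t (obs_part ?e t None w)"
  define b1 where "b1 x = marginal t (obs_part ?e t (Some x) w) x" for x
  define a0 where "a0 = dec_act ?d os None t"
  have b1_nonneg: "0 \<le> b1 x" for x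
    unfolding b1_def by (intro marginal_nonneg obs_part_nonneg Suc.prems(2))
  have IH: "continuation ?e ?d k t (obs_part ?e t ob w)
      = belief_value k (Suc t) (marginal (Suc t) (succ_weight (obs_part ?e t ob w) (trans_kernel ?e ?d t)))"
    if "0 \<le> c'"
      and "marginal (Suc t) (succ_weight (obs_part ?e t ob w) (trans_kernel ?e ?d t))
        = (\<lambda>y. c' * opt_belief T mu (Suc t) (last_tx (Suc t) (os @ [ob])) y)" for ob c'
    unfolding continuation_def using that length_os Suc.prems(2,4)
    by (intro Suc.IH[OF obs_succ_weight_obs_part[OF support]] succ_weight_nonneg obs_part_nonneg) simp_all
  have "continuation ?e ?d k t (obs_part ?e t None w) = belief_value k (Suc t) (predict b0 a0)"
    using IH[OF Suc.prems(5) marginal_succ_None_opt_policy[OF length_os T support Suc.prems(6)]]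
    by (simp add: marginal_succ_None[OF support] b0_def a0_def)
  moreover have "continuation ?e ?d k t (obs_part ?e t (Some x) w)
      = b1 x * belief_value k (Suc t) (pmf (P (opt_action k t x) x))" for x
    using IH[OF b1_nonneg[unfolded b1_def] marginal_succ_Some_opt_policy[OF length_os T support Suc.prems(6)]]
    by (simp add: marginal_succ_Some[OF support] dec_act_opt_dec_Some[OF length_os T] belief_value_scale
        b1_nonneg[unfolded b1_def] b1_def)
  ultimately have "(\<Sum>h\<in>hists t. w h * reward_to_go ?e ?d (Suc k) t h) = split_value k t a0 b0 b1"
    unfolding sum_reward_to_go_Suc_split[OF support] split_value_def dec_act_opt_dec_Some[OF length_os T]
      a0_def[symmetric] b0_def[symmetric] b1_def[symmetric] tx_gain_opt_action[symmetric]
    by (simp add: tx_gain_def algebra_simps)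
  also have "\<dots> = belief_value (Suc k) t (marginal t w)"
    unfolding a0_def b0_def b1_def using split_value_opt_policy[OF length_os T support Suc.prems(6,5)] .
  finally show ?case .
qed simp

section \<open>Infinite horizon\<close>

lemma discounted_stages_le_belief_value:
  "(\<Sum>t<T. \<gamma> ^ t * stage P mu r \<beta> e d t) \<le> belief_value T 0 (pmf mu)"
  using sum_reward_to_go_le_belief_value[where t = 0 and w = "\<lambda>h. pmf mu (h ! 0)" and os = "[]" and k = T]
  by (simp add: discounted_stages_eq_reward_to_go marginal_hists_0)

lemma discounted_stages_opt_policy:
  "(\<Sum>t<T. \<gamma> ^ t * stage P mu r \<beta> (struct_enc (opt_enc T mu)) (struct_dec (opt_dec T mu)) t)
    = belief_value T 0 (pmf mu)"
  using sum_reward_to_go_opt_policy[where t = 0 and w = "\<lambda>h. pmf mu (h ! 0)" and T = T and mu = mu and os = "[]"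
      and k = T and c = 1]
  by (simp add: discounted_stages_eq_reward_to_go marginal_hists_0 last_tx_Nil)

lemma abs_stage_le:
  assumes "\<And>x a y. \<bar>r x a y\<bar> \<le> K"
  shows "\<bar>stage P mu r \<beta> e d t\<bar> \<le> K + \<bar>\<beta>\<bar>"
proof -
  let ?f = "\<lambda>h. r (h ! t) (act e d h t) (h ! Suc t) - \<beta> * (if comm e h t then 1 else 0)"
  have int: "integrable (hist P mu e d (Suc t)) ?f"
    by (rule integrable_measure_pmf_finite) (meson finite_hists finite_subset set_pmf_hist)
  have "?f h \<le> K + \<bar>\<beta>\<bar>" "- (K + \<bar>\<beta>\<bar>) \<le> ?f h" for h
    using assms[of "h ! t" "act e d h t" "h ! Suc t"] by auto
  then have "stage P mu r \<beta> e d t \<le> K + \<bar>\<beta>\<bar>" "- (K + \<bar>\<beta>\<bar>) \<le> stage P mu r \<beta> e d t"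
    unfolding stage_def
    by (intro measure_pmf.integral_le_const[OF int] measure_pmf.integral_ge_const[OF int] AE_I2; simp)+
  then show ?thesis
    by (simp add: abs_le_iff)
qed

lemma stage_bounded: "\<exists>B. \<forall>mu e d t. \<bar>stage P mu r \<beta> e d t\<bar> \<le> B"
proof -
  have "\<bar>r x a y\<bar> \<le> Max (range (\<lambda>(x, a, y). \<bar>r x a y\<bar>))" for x a y
    using Max_range_ge[of "\<lambda>(x, a, y). \<bar>r x a y\<bar>" "(x, a, y)"] by simp
  then show ?thesis
    using abs_stage_le by blast
qed

context
  fixes B :: real
  assumes discount: "0 \<le> \<gamma>" "\<gamma> < 1"
    and stage_bound: "\<And>mu e d t. \<bar>stage P mu r \<beta> e d t\<bar> \<le> B"
begin

lemma objective_truncation: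
  "\<bar>objective P mu r \<gamma> \<beta> e d - (\<Sum>t<T. \<gamma> ^ t * stage P mu r \<beta> e d t)\<bar> \<le> B * \<gamma> ^ T / (1 - \<gamma>)"
  unfolding objective_def using discount stage_bound by (rule abs_discounted_tail_le)

lemma objective_le: "objective P mu r \<gamma> \<beta> e d \<le> B / (1 - \<gamma>)"
  using objective_truncation[where mu = mu and e = e and d = d and T = 0] by (simp add: abs_le_iff)

lemma objective_le_opt_policy:
  "objective P mu r \<gamma> \<beta> e d
     \<le> objective P mu r \<gamma> \<beta> (struct_enc (opt_enc T mu)) (struct_dec (opt_dec T mu)) + 2 * B / (1 - \<gamma>) * \<gamma> ^ T"
  using objective_truncation[where mu = mu and e = e and d = d and T = T]
    objective_truncation[where mu = mu and e = "struct_enc (opt_enc T mu)" and d = "struct_dec (opt_dec T mu)" and T = T]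
    discounted_stages_le_belief_value[where mu = mu and e = e and d = d and T = T]
    discounted_stages_opt_policy[where mu = mu and T = T]
  by (simp add: abs_le_iff)

end

end

theorem theorem1:
  fixes P :: "'b::finite \<Rightarrow> 'a::finite \<Rightarrow> 'a pmf"
    and mu :: "'a pmf"
    and r :: "'a \<Rightarrow> 'b \<Rightarrow> 'a \<Rightarrow> real"
    and \<gamma> \<beta> :: real
  assumes "0 \<le> \<gamma>" and "\<gamma> < 1" and "\<beta> > 0"
  shows "(SUP ed \<in> (UNIV :: ((nat \<Rightarrow> 'a list \<Rightarrow> 'a option list \<Rightarrow> bool) \<times>
                              (nat \<Rightarrow> 'a option list \<Rightarrow> 'b list \<Rightarrow> 'b)) set).
            objective P mu r \<gamma> \<beta> (fst ed) (snd ed))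
       = (SUP fg \<in> (UNIV :: ((nat \<Rightarrow> 'a \<Rightarrow> (nat \<times> 'a) option \<Rightarrow> bool) \<times>
                              (nat \<Rightarrow> (nat \<times> 'a) option \<Rightarrow> 'b)) set).
            objective P mu r \<gamma> \<beta> (struct_enc (fst fg)) (struct_dec (snd fg)))"
    (is "?general = ?structured")
proof -
  interpret remote_control P r \<gamma> \<beta> .
  obtain B where B: "\<And>mu e d t. \<bar>stage P mu r \<beta> e d t\<bar> \<le> B"
    using stage_bounded by blast
  have bdd_structured: "bdd_above ((\<lambda>fg. objective P mu r \<gamma> \<beta> (struct_enc (fst fg)) (struct_dec (snd fg))) ` UNIV)"
    using objective_le[OF assms(1,2) B] by (intro bdd_aboveI2) simp
  have "?general \<le> ?structured"
  proof (rule cSUP_least)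
    fix ed :: "(nat \<Rightarrow> 'a list \<Rightarrow> 'a option list \<Rightarrow> bool) \<times> (nat \<Rightarrow> 'a option list \<Rightarrow> 'b list \<Rightarrow> 'b)"
    have "objective P mu r \<gamma> \<beta> (fst ed) (snd ed) \<le> ?structured + 2 * B / (1 - \<gamma>) * \<gamma> ^ T" for T
      using objective_le_opt_policy[OF assms(1,2) B, of mu "fst ed" "snd ed" T]
        cSUP_upper[OF UNIV_I bdd_structured, of "(opt_enc T mu, opt_dec T mu)"] by simp
    then show "objective P mu r \<gamma> \<beta> (fst ed) (snd ed) \<le> ?structured"
      by (rule le_of_le_plus_geometric[OF assms(1,2)])
  qed simp
  moreover have "?structured \<le> ?general"
    using objective_le[OF assms(1,2) B]
    by (intro cSUP_mono) (auto intro!: bdd_aboveI2 exI[of _ "(struct_enc _, struct_dec _)"])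
  ultimately show ?thesis
    by (rule antisym)
qed

end
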